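(* Let $\psi:S_X\to\mathbb{R}$ be bounded and measurable, $\sigma_X=(\sigma_X^0,\sigma_X[\cdot,\cdot])$ a memory-one strategy for $X$, and $\sigma_Y$ any behavioral strategy for $Y$, generating the measures $\nu_t$. Then $$\sum_{t=0}^\infty\lambda^t\int_{S_X\times S_Y}\Big[\psi(x)-\lambda\int_{S_X}\psi(s)\,d\sigma_X[x,y](s)\Big]\,d\nu_t(x,y)=\int_{S_X}\psi(s)\,d\sigma_X^0(s).$$
   Context: Standing framework. Let $S_X,S_Y$ be measurable spaces, and $\lambda\in(0,1)$. For $T\ge 0$ let $\mathcal{H}^T=(S_X\times S_Y)^T$ ($\mathcal{H}^0=\{\varnothing\}$) and $\mathcal{H}=\bigsqcup_{T\ge0}\mathcal{H}^T$. A behavioral strategy for $X$ (resp. $Y$) is a Markov kernel from $\mathcal{H}$ to $S_X$ (resp. $S_Y$). A memory-one strategy for $X$ is a behavioral strategy determined by a probability measure $\sigma_X^0$ on $S_X$ (used at the empty history) and a Markov kernel $(x,y)\mapsto\sigma_X[x,y]$ from $S_X\times S_Y$ to $S_X$, with $\sigma_X[h^T]=\sigma_X[x_{T-1},y_{T-1}]$ for $h^T=((x_0,y_0),\dots,(x_{T-1},y_{T-1}))$, $T\ge1$. Given behavioral strategies $\sigma_X,\sigma_Y$, put $\sigma(h)=\sigma_X[h]\otimes\sigma_Y[h]$ and define probability measures $\mu_t$ on $\mathcal{H}^{t+1}$ by $\mu_0=\sigma(\varnothing)$ and $\mu_t(E'\times E)=\int_{E'}\sigma(h)(E)\,d\mu_{t-1}(h)$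 (uniquely extended). Let $\nu_t(E)=\mu_t(\mathcal{H}^t\times E)$ be the distribution of the action pair at time $t$. *)

theory Defs
  imports "HOL-Probability.Probability"
begin

text \<open>Histories of length T: H^T = (S_X \<times> S_Y)^T, represented as functions
  on {..<T} (extensional, undefined outside).\<close>
definition hist :: "'x measure \<Rightarrow> 'y measure \<Rightarrow> nat \<Rightarrow> (nat \<Rightarrow> 'x \<times> 'y) measure" where
  "hist MX MY T = PiM {..<T} (\<lambda>_. MX \<Otimes>\<^sub>M MY)"

text \<open>A behavioral strategy (Markov kernel from the disjoint union H of all H^T to S)
  is given as a family of Markov kernels, one for each history length T.\<close>
definition behavioral :: "'x measure \<Rightarrow> 'y measure \<Rightarrow> 'a measure
    \<Rightarrow> (nat \<Rightarrow> (nat \<Rightarrow> 'x \<times> 'y) \<Rightarrow> 'a measure) \<Rightarrow> bool" where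
  "behavioral MX MY M s \<longleftrightarrow> (\<forall>T. s T \<in> hist MX MY T \<rightarrow>\<^sub>M prob_algebra M)"

definition memory_one :: "'x measure \<Rightarrow> ('x \<Rightarrow> 'y \<Rightarrow> 'x measure)
    \<Rightarrow> nat \<Rightarrow> (nat \<Rightarrow> 'x \<times> 'y) \<Rightarrow> 'x measure" where
  "memory_one s0 s1 T h = (case T of 0 \<Rightarrow> s0 | Suc T' \<Rightarrow> s1 (fst (h T')) (snd (h T')))"

definition joint :: "(nat \<Rightarrow> (nat \<Rightarrow> 'x \<times> 'y) \<Rightarrow> 'x measure)
    \<Rightarrow> (nat \<Rightarrow> (nat \<Rightarrow> 'x \<times> 'y) \<Rightarrow> 'y measure) \<Rightarrow> nat \<Rightarrow> (nat \<Rightarrow> 'x \<times> 'y) \<Rightarrow> ('x \<times> 'y) measure" where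
  "joint sX sY T h = sX T h \<Otimes>\<^sub>M sY T h"

text \<open>histm n is the law of the history of length n; hence mu_t = histm (Suc t).
  histm 0 is the Dirac measure at the empty history, and
  histm (Suc t) (E' \<times> E) = \<integral>_{E'} sigma(h)(E) d histm t.\<close>
primrec histm :: "'x measure \<Rightarrow> 'y measure \<Rightarrow> (nat \<Rightarrow> (nat \<Rightarrow> 'x \<times> 'y) \<Rightarrow> 'x measure)
    \<Rightarrow> (nat \<Rightarrow> (nat \<Rightarrow> 'x \<times> 'y) \<Rightarrow> 'y measure) \<Rightarrow> nat \<Rightarrow> (nat \<Rightarrow> 'x \<times> 'y) measure" where
  "histm MX MY sX sY 0 = return (hist MX MY 0) (\<lambda>_. undefined)"
| "histm MX MY sX sY (Suc t) =
     histm MX MY sX sY t \<bind>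
       (\<lambda>h. distr (joint sX sY t h) (hist MX MY (Suc t)) (\<lambda>a. h(t := a)))"

definition mu where "mu MX MY sX sY t = histm MX MY sX sY (Suc t)"

definition nu :: "'x measure \<Rightarrow> 'y measure \<Rightarrow> (nat \<Rightarrow> (nat \<Rightarrow> 'x \<times> 'y) \<Rightarrow> 'x measure)
    \<Rightarrow> (nat \<Rightarrow> (nat \<Rightarrow> 'x \<times> 'y) \<Rightarrow> 'y measure) \<Rightarrow> nat \<Rightarrow> ('x \<times> 'y) measure" where
  "nu MX MY sX sY t = distr (mu MX MY sX sY t) (MX \<Otimes>\<^sub>M MY) (\<lambda>h. h t)"

end

theory Submission
  imports Defs
begin

text \<open>Let \<open>A t = \<integral>\<psi>(x) d\<nu>\<^sub>t(x, y)\<close> be the expected value of \<open>\<psi>\<close> at X's action at time \<open>t\<close>.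
  The action at time \<open>t + 1\<close> is drawn from \<open>\<sigma>\<^sub>X[x\<^sub>t, y\<^sub>t]\<close>, so
  \<open>A (t + 1) = \<integral>\<integral>\<psi> d\<sigma>\<^sub>X[x, y] d\<nu>\<^sub>t\<close>, while \<open>A 0 = \<integral>\<psi> d\<sigma>\<^sub>X\<^sup>0\<close>. Hence the \<open>t\<close>-th summand
  is \<open>\<lambda>\<^sup>t A t - \<lambda>\<^sup>t\<^sup>+\<^sup>1 A (t + 1)\<close>, and the series telescopes to \<open>A 0\<close> because \<open>A\<close> is bounded.\<close>

lemma hist_Suc: "hist MX MY (Suc t) = PiM (insert t {..<t}) (\<lambda>_. MX \<Otimes>\<^sub>M MY)"
  by (simp add: hist_def lessThan_Suc)

lemma measurable_hist_last: "(\<lambda>h. h t) \<in> hist MX MY (Suc t) \<rightarrow>\<^sub>M MX \<Otimes>\<^sub>M MY"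
  unfolding hist_def by (rule measurable_component_singleton) simp

lemma
  fixes f :: "'a \<Rightarrow> real"
  assumes N: "N \<in> space (prob_algebra K)"
    and f: "f \<in> borel_measurable K" and bound: "\<And>x. x \<in> space K \<Longrightarrow> \<bar>f x\<bar> \<le> B"
  shows integrable_bounded_prob_algebra: "integrable N f"
    and abs_integral_bounded_prob_algebra: "\<bar>\<integral>x. f x \<partial>N\<bar> \<le> B"
proof -
  interpret prob_space N using N by (simp add: space_prob_algebra)
  have sets: "sets N = sets K" using N by (simp add: space_prob_algebra)
  have fN: "f \<in> borel_measurable N" using f by (simp cong: measurable_cong_sets[OF sets])
  have boundN: "\<bar>f x\<bar> \<le> B" if "x \<in> space N" for x
    using bound that sets_eq_imp_space_eq[OF sets] by simp
  show int: "integrable N f" using fN boundN by (intro integrable_const_bound[where B=B]) auto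
  have "(\<integral>x. \<bar>f x\<bar> \<partial>N) \<le> B"
    using int boundN by (intro integral_le_const) (auto intro!: AE_I2)
  then show "\<bar>\<integral>x. f x \<partial>N\<bar> \<le> B" using integral_abs_bound[of N f] by linarith
qed

lemma integral_pair_measure_fst:
  fixes \<psi> :: "'a \<Rightarrow> real"
  assumes "prob_space N" "\<psi> \<in> borel_measurable M"
  shows "(\<integral>z. \<psi> (fst z) \<partial>(M \<Otimes>\<^sub>M N)) = (\<integral>x. \<psi> x \<partial>M)"
proof -
  interpret prob_space N by fact
  have "(\<integral>x. \<psi> x \<partial>M) = (\<integral>x. \<psi> x \<partial>distr (M \<Otimes>\<^sub>M N) M fst)" by (simp add: distr_pair_fst)
  also have "\<dots> = (\<integral>z. \<psi> (fst z) \<partial>(M \<Otimes>\<^sub>M N))"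
    by (rule integral_distr[OF measurable_fst assms(2)])
  finally show ?thesis by simp
qed

lemma discounted_differences_sums:
  fixes A :: "nat \<Rightarrow> real"
  assumes "0 \<le> lam" "lam < 1" and bound: "\<And>t. \<bar>A t\<bar> \<le> B"
  shows "(\<lambda>t. lam ^ t * A t - lam ^ Suc t * A (Suc t)) sums A 0"
proof -
  have "(\<lambda>t. lam ^ t * A t) \<longlonglongrightarrow> 0"
  proof (rule Lim_null_comparison)
    show "\<forall>\<^sub>F t in sequentially. norm (lam ^ t * A t) \<le> lam ^ t * B"
      using bound assms(1) by (intro always_eventually allI) (simp add: abs_mult mult_left_mono)
    show "(\<lambda>t. lam ^ t * B) \<longlonglongrightarrow> 0"
      using assms(1,2) by (intro tendsto_mult_left_zero LIMSEQ_power_zero) auto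
  qed
  from telescope_sums'[OF this] show ?thesis by simp
qed

context
  fixes MX :: "'x measure" and MY :: "'y measure"
    and sX :: "nat \<Rightarrow> (nat \<Rightarrow> 'x \<times> 'y) \<Rightarrow> 'x measure"
    and sY :: "nat \<Rightarrow> (nat \<Rightarrow> 'x \<times> 'y) \<Rightarrow> 'y measure"
  assumes sX: "behavioral MX MY MX sX" and sY: "behavioral MX MY MY sY"
begin

lemma measurable_joint: "joint sX sY t \<in> hist MX MY t \<rightarrow>\<^sub>M prob_algebra (MX \<Otimes>\<^sub>M MY)"
  using sX sY unfolding behavioral_def joint_def[abs_def] by (intro measurable_pair_prob) auto

lemma measurable_histm_step:
  "(\<lambda>h. distr (joint sX sY t h) (hist MX MY (Suc t)) (\<lambda>a. h(t := a)))
     \<in> hist MX MY t \<rightarrow>\<^sub>M prob_algebra (hist MX MY (Suc t))"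
  by (rule measurable_distr_prob_space2[OF measurable_joint])
    (use measurable_add_dim[of t "{..<t}" "\<lambda>_. MX \<Otimes>\<^sub>M MY"] in \<open>simp add: hist_def lessThan_Suc\<close>)

lemma histm_in_prob_algebra: "histm MX MY sX sY t \<in> space (prob_algebra (hist MX MY t))"
proof (induction t)
  case 0
  show ?case by (simp add: hist_def measurable_space[OF measurable_return_prob_space])
next
  case (Suc t)
  show ?case
    using prob_space_bind'[OF Suc measurable_histm_step] sets_bind'[OF Suc measurable_histm_step]
    by (simp add: space_prob_algebra)
qed

lemma sets_histm: "sets (histm MX MY sX sY t) = sets (hist MX MY t)"
  using histm_in_prob_algebra by (simp add: space_prob_algebra)

lemma measurable_histm_last: "(\<lambda>h. h t) \<in> histm MX MY sX sY (Suc t) \<rightarrow>\<^sub>M MX \<Otimes>\<^sub>M MY"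
  by (simp add: measurable_hist_last cong: measurable_cong_sets[OF sets_histm])

lemma nu_in_prob_algebra: "nu MX MY sX sY t \<in> space (prob_algebra (MX \<Otimes>\<^sub>M MY))"
proof -
  interpret prob_space "histm MX MY sX sY (Suc t)"
    using histm_in_prob_algebra[of "Suc t"] unfolding space_prob_algebra by blast
  show ?thesis
    unfolding nu_def mu_def
    using prob_space_distr[OF measurable_histm_last] by (simp add: space_prob_algebra)
qed

lemma integral_nu:
  fixes F :: "'x \<times> 'y \<Rightarrow> real"
  assumes "F \<in> borel_measurable (MX \<Otimes>\<^sub>M MY)"
  shows "(\<integral>z. F z \<partial>nu MX MY sX sY t) = (\<integral>h. F (h t) \<partial>histm MX MY sX sY (Suc t))"
  unfolding nu_def mu_def by (rule integral_distr[OF measurable_histm_last assms])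

lemma integral_histm_Suc_last:
  fixes F :: "'x \<times> 'y \<Rightarrow> real"
  assumes F: "F \<in> borel_measurable (MX \<Otimes>\<^sub>M MY)"
    and bound: "\<And>z. z \<in> space (MX \<Otimes>\<^sub>M MY) \<Longrightarrow> \<bar>F z\<bar> \<le> B"
  shows "(\<integral>h. F (h t) \<partial>histm MX MY sX sY (Suc t))
       = (\<integral>h. (\<integral>z. F z \<partial>joint sX sY t h) \<partial>histm MX MY sX sY t)"
proof -
  let ?H = "histm MX MY sX sY t"
  let ?K = "\<lambda>h. distr (joint sX sY t h) (hist MX MY (Suc t)) (\<lambda>a. h(t := a))"
  have space_H: "space ?H = space (hist MX MY t)"
    by (rule sets_eq_imp_space_eq[OF sets_histm])
  have K: "?K \<in> ?H \<rightarrow>\<^sub>M subprob_algebra (hist MX MY (Suc t))"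
    using measurable_prob_algebraD[OF measurable_histm_step]
    by (simp cong: measurable_cong_sets[OF sets_histm])
  have finite: "finite_measure ?H"
    using histm_in_prob_algebra by (simp add: space_prob_algebra prob_space_def)
  have FK: "(\<lambda>h. F (h t)) \<in> borel_measurable (hist MX MY (Suc t))"
    by (rule measurable_compose[OF measurable_hist_last F])
  have K_le_1: "AE h in ?H. emeasure (?K h) (space (?K h)) \<le> ennreal 1"
    using measurable_space[OF measurable_histm_step]
    by (intro AE_I2) (auto simp: space_H space_prob_algebra intro: prob_space.emeasure_le_1)
  have "(\<integral>h. F (h t) \<partial>histm MX MY sX sY (Suc t)) = (\<integral>h. (\<integral>g. F (g t) \<partial>?K h) \<partial>?H)"
    unfolding histm.simps
    by (rule integral_bind[OF FK _ K finite K_le_1])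
      (use bound measurable_space[OF measurable_hist_last] in blast)
  also have "\<dots> = (\<integral>h. (\<integral>z. F z \<partial>joint sX sY t h) \<partial>?H)"
  proof (rule Bochner_Integration.integral_cong[OF refl])
    fix h assume "h \<in> space ?H"
    then have h: "h \<in> space (hist MX MY t)" by (simp add: space_H)
    have sets_joint: "sets (joint sX sY t h) = sets (MX \<Otimes>\<^sub>M MY)"
      using measurable_space[OF measurable_joint h] by (simp add: space_prob_algebra)
    have "(\<lambda>a. h(t := a)) \<in> joint sX sY t h \<rightarrow>\<^sub>M hist MX MY (Suc t)"
      unfolding hist_Suc measurable_cong_sets[OF sets_joint refl]
      using measurable_component_update[of h "{..<t}" "\<lambda>_. MX \<Otimes>\<^sub>M MY" t] h
      by (simp add: hist_def)
    then show "(\<integral>g. F (g t) \<partial>?K h) = (\<integral>z. F z \<partial>joint sX sY t h)"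
      by (simp add: integral_distr[OF _ FK])
  qed
  finally show ?thesis .
qed

lemma integral_nu_fst:
  fixes \<psi> :: "'x \<Rightarrow> real"
  assumes \<psi>: "\<psi> \<in> borel_measurable MX" and bound: "\<And>x. x \<in> space MX \<Longrightarrow> \<bar>\<psi> x\<bar> \<le> B"
  shows "(\<integral>z. \<psi> (fst z) \<partial>nu MX MY sX sY t)
       = (\<integral>h. (\<integral>x. \<psi> x \<partial>sX t h) \<partial>histm MX MY sX sY t)"
proof -
  have \<psi>_fst: "(\<lambda>z. \<psi> (fst z)) \<in> borel_measurable (MX \<Otimes>\<^sub>M MY)" using \<psi> by measurable
  have "(\<integral>z. \<psi> (fst z) \<partial>nu MX MY sX sY t)
      = (\<integral>h. (\<integral>z. \<psi> (fst z) \<partial>joint sX sY t h) \<partial>histm MX MY sX sY t)"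
    unfolding integral_nu[OF \<psi>_fst]
    by (rule integral_histm_Suc_last[OF \<psi>_fst]) (use bound in \<open>auto simp: space_pair_measure\<close>)
  also have "\<dots> = (\<integral>h. (\<integral>x. \<psi> x \<partial>sX t h) \<partial>histm MX MY sX sY t)"
  proof (rule Bochner_Integration.integral_cong[OF refl])
    fix h assume "h \<in> space (histm MX MY sX sY t)"
    then have h: "h \<in> space (hist MX MY t)" by (simp add: sets_eq_imp_space_eq[OF sets_histm])
    have "sets (sX t h) = sets MX" "prob_space (sY t h)"
      using measurable_space[OF sX[unfolded behavioral_def, rule_format] h]
        measurable_space[OF sY[unfolded behavioral_def, rule_format] h]
      by (auto simp: space_prob_algebra)
    then show "(\<integral>z. \<psi> (fst z) \<partial>joint sX sY t h) = (\<integral>x. \<psi> x \<partial>sX t h)"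
      unfolding joint_def using \<psi> by (simp add: integral_pair_measure_fst cong: measurable_cong_sets)
  qed
  finally show ?thesis .
qed

end

lemma behavioral_memory_one:
  assumes "sX0 \<in> space (prob_algebra MX)"
    and "(\<lambda>(x, y). sX1 x y) \<in> MX \<Otimes>\<^sub>M MY \<rightarrow>\<^sub>M prob_algebra MX"
  shows "behavioral MX MY MX (memory_one sX0 sX1)"
  unfolding behavioral_def
proof
  fix T show "memory_one sX0 sX1 T \<in> hist MX MY T \<rightarrow>\<^sub>M prob_algebra MX"
  proof (cases T)
    case 0
    have "memory_one sX0 sX1 T = (\<lambda>_. sX0)"
      by (rule ext) (simp add: memory_one_def 0)
    then show ?thesis using assms(1) by simp
  next
    case (Suc t)
    have "memory_one sX0 sX1 T = (\<lambda>h. (\<lambda>(x, y). sX1 x y) (h t))"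
      by (rule ext) (simp add: memory_one_def Suc case_prod_beta)
    then show ?thesis using measurable_compose[OF measurable_hist_last assms(2)] Suc by simp
  qed
qed

context
  fixes MX :: "'x measure" and MY :: "'y measure"
    and sX0 :: "'x measure" and sX1 :: "'x \<Rightarrow> 'y \<Rightarrow> 'x measure"
    and sY :: "nat \<Rightarrow> (nat \<Rightarrow> 'x \<times> 'y) \<Rightarrow> 'y measure"
    and \<psi> :: "'x \<Rightarrow> real" and B :: real
  assumes sX0: "sX0 \<in> space (prob_algebra MX)"
    and sX1: "(\<lambda>(x, y). sX1 x y) \<in> MX \<Otimes>\<^sub>M MY \<rightarrow>\<^sub>M prob_algebra MX"
    and sY: "behavioral MX MY MY sY"
    and \<psi>: "\<psi> \<in> borel_measurable MX" and \<psi>_bound: "\<And>x. x \<in> space MX \<Longrightarrow> \<bar>\<psi> x\<bar> \<le> B"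
begin

lemma integral_nu_fst_memory_one_0:
  "(\<integral>z. \<psi> (fst z) \<partial>nu MX MY (memory_one sX0 sX1) sY 0) = (\<integral>x. \<psi> x \<partial>sX0)"
  by (simp add: integral_nu_fst[OF behavioral_memory_one[OF sX0 sX1] sY \<psi> \<psi>_bound]
      memory_one_def hist_def measure_return space_PiM_empty sets_PiM_empty)

lemma measurable_integral_memory_kernel:
  "(\<lambda>(x, y). \<integral>s. \<psi> s \<partial>sX1 x y) \<in> borel_measurable (MX \<Otimes>\<^sub>M MY)"
  using measurable_compose[OF measurable_prob_algebraD[OF sX1] integral_measurable_subprob_algebra[OF \<psi>]]
  by (simp add: case_prod_beta')

lemma abs_integral_memory_kernel_le:
  assumes "(x, y) \<in> space (MX \<Otimes>\<^sub>M MY)"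
  shows "\<bar>\<integral>s. \<psi> s \<partial>sX1 x y\<bar> \<le> B"
  using measurable_space[OF sX1 assms]
  by (auto intro: abs_integral_bounded_prob_algebra[OF _ \<psi> \<psi>_bound])

lemma integral_nu_fst_memory_one_Suc:
  "(\<integral>z. \<psi> (fst z) \<partial>nu MX MY (memory_one sX0 sX1) sY (Suc t))
     = (\<integral>(x, y). (\<integral>s. \<psi> s \<partial>sX1 x y) \<partial>nu MX MY (memory_one sX0 sX1) sY t)"
  by (simp add: integral_nu_fst[OF behavioral_memory_one[OF sX0 sX1] sY \<psi> \<psi>_bound]
      integral_nu[OF behavioral_memory_one[OF sX0 sX1] sY measurable_integral_memory_kernel]
      memory_one_def case_prod_beta)

lemma abs_integral_nu_fst_memory_one_le:
  "\<bar>\<integral>z. \<psi> (fst z) \<partial>nu MX MY (memory_one sX0 sX1) sY t\<bar> \<le> B"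
  by (rule abs_integral_bounded_prob_algebra[OF nu_in_prob_algebra[OF behavioral_memory_one[OF sX0 sX1] sY]])
    (use \<psi> \<psi>_bound in \<open>auto simp: space_pair_measure\<close>)

lemma integral_nu_memory_one_difference:
  "(\<integral>(x, y). (\<psi> x - lam * (\<integral>s. \<psi> s \<partial>sX1 x y)) \<partial>nu MX MY (memory_one sX0 sX1) sY t)
     = (\<integral>z. \<psi> (fst z) \<partial>nu MX MY (memory_one sX0 sX1) sY t)
       - lam * (\<integral>z. \<psi> (fst z) \<partial>nu MX MY (memory_one sX0 sX1) sY (Suc t))"
proof -
  let ?\<nu> = "nu MX MY (memory_one sX0 sX1) sY t"
  have \<nu>: "?\<nu> \<in> space (prob_algebra (MX \<Otimes>\<^sub>M MY))"
    by (rule nu_in_prob_algebra[OF behavioral_memory_one[OF sX0 sX1] sY])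
  have "integrable ?\<nu> (\<lambda>z. \<psi> (fst z))"
    by (rule integrable_bounded_prob_algebra[OF \<nu>])
      (use \<psi> \<psi>_bound in \<open>auto simp: space_pair_measure\<close>)
  moreover have "integrable ?\<nu> (\<lambda>(x, y). \<integral>s. \<psi> s \<partial>sX1 x y)"
    by (rule integrable_bounded_prob_algebra[OF \<nu> measurable_integral_memory_kernel])
      (use abs_integral_memory_kernel_le in auto)
  ultimately show ?thesis
    by (simp add: integral_nu_fst_memory_one_Suc split_beta')
qed

end

theorem proposition1:
  fixes MX :: "'x measure" and MY :: "'y measure" and lam :: real
    and psi :: "'x \<Rightarrow> real"
    and sX0 :: "'x measure" and sX1 :: "'x \<Rightarrow> 'y \<Rightarrow> 'x measure"
    and sY :: "nat \<Rightarrow> (nat \<Rightarrow> 'x \<times> 'y) \<Rightarrow> 'y measure"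
  assumes "0 < lam" and "lam < 1"
    and "psi \<in> borel_measurable MX"
    and "\<exists>B. \<forall>x\<in>space MX. \<bar>psi x\<bar> \<le> B"
    and "sX0 \<in> space (prob_algebra MX)"
    and "(\<lambda>(x, y). sX1 x y) \<in> MX \<Otimes>\<^sub>M MY \<rightarrow>\<^sub>M prob_algebra MX"
    and "behavioral MX MY MY sY"
  shows "(\<lambda>t. lam ^ t * (\<integral>(x, y). (psi x - lam * (\<integral>s. psi s \<partial>sX1 x y))
            \<partial>nu MX MY (memory_one sX0 sX1) sY t))
         sums (\<integral>s. psi s \<partial>sX0)"
proof -
  obtain B where bound: "\<And>x. x \<in> space MX \<Longrightarrow> \<bar>psi x\<bar> \<le> B" using assms(4) by blast
  note memory_one_facts = integral_nu_memory_one_difference[OF assms(5-7,3) bound]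
    integral_nu_fst_memory_one_0[OF assms(5-7,3) bound]
    abs_integral_nu_fst_memory_one_le[OF assms(5-7,3) bound]
  let ?A = "\<lambda>t. \<integral>z. psi (fst z) \<partial>nu MX MY (memory_one sX0 sX1) sY t"
  have "(\<lambda>t. lam ^ t * ?A t - lam ^ Suc t * ?A (Suc t)) sums ?A 0"
    using assms(1,2) memory_one_facts(3) by (intro discounted_differences_sums) auto
  then show ?thesis
    by (simp add: memory_one_facts right_diff_distrib mult_ac)
qed

end
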